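(* Let $(\bar x,\bar r)\in\mathbb{R}^n\times\mathbb{R}^2_+$ with $\bar r=\mathbb{Q}(\bar x)$ be a local optimal solution of problem (P2), and suppose $(\bar x,\bar\xi)\in\mathcal{M}(\bar r)$. Then $(\bar x,\bar\lambda)$ with $\bar\lambda:=\bar\xi$ is a local optimal solution of problem (P1).
   Context: Fix $\Psi\in\mathbb{R}^{d\times n}$, linear difference operators $D_1,\dots,D_n$ (matrices with $n$ columns), and $\|x\|_{\mathrm{TV}}:=\sum_{i=1}^n\|D_ix\|_1$. Training data $\Phi_{\mathrm{tr}}\in\mathbb{R}^{m_1\times n}$, $b_{\mathrm{tr}}\in\mathbb{R}^{m_1}$ and validation data $\Phi_{\mathrm{val}}\in\mathbb{R}^{m_2\times n}$, $b_{\mathrm{val}}\in\mathbb{R}^{m_2}$ are given. Let $F(x):=\frac12\|\Phi_{\mathrm{val}}x-b_{\mathrm{val}}\|_2^2$. For $\lambda\in\mathbb{R}^2_+$, $\mathbb{S}_p(\lambda)$ is the set of minimizers over $x\in\mathbb{R}^n$ of $\frac12\|\Phi_{\mathrm{tr}}x-b_{\mathrm{tr}}\|_2^2+\lambda_1\|\Psi x\|_1+\lambda_2\|x\|_{\mathrm{TV}}$; for $r\in\mathbb{R}^2_+$, $\mathbb{S}_c(r)$ is the set of minimizers over $x\in\mathbb{R}^n$ of $\frac12\|\Phi_{\mathrm{tr}}x-b_{\mathrm{tr}}\|_2^2$ subject to $\|\Psi x\|_1\le r_1$, $\|x\|_{\mathrm{TV}}\le r_2$. Problem (P1): minimize $F(x)$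 over $(x,\lambda)\in\mathbb{R}^n\times\mathbb{R}^2_+$ subject to $x\in\mathbb{S}_p(\lambda)$. Problem (P2): minimize $F(x)$ over $(x,r)\in\mathbb{R}^n\times\mathbb{R}^2_+$ subject to $x\in\mathbb{S}_c(r)$. A feasible point $(\bar x,\bar y)$ of either problem is a local optimal solution if there is $\varepsilon>0$ such that $F(\bar x)\le F(x)$ for every feasible $(x,y)$ with $\|(x,y)-(\bar x,\bar y)\|<\varepsilon$. $\mathbb{Q}(x):=(\|\Psi x\|_1,\|x\|_{\mathrm{TV}})\in\mathbb{R}^2_+$. For $r\in\mathbb{R}^2_+$, $\mathcal{M}(r):=\{(x,\xi)\in\mathbb{R}^n\times\mathbb{R}^2_+ : 0\in\Phi_{\mathrm{tr}}^\top(\Phi_{\mathrm{tr}}x-b_{\mathrm{tr}})+\xi_1\Psi^\top\partial\|\cdot\|_1(\Psi x)+\xi_2\sum_{i=1}^n D_i^\top\partial\|\cdot\|_1(D_ix),\ \xi_1(\|\Psi x\|_1-r_1)=0,\ \xi_2(\|x\|_{\mathrm{TV}}-r_2)=0\}$, where $\partial$ is the convex subdifferential. *)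

theory Defs
  imports "HOL-Analysis.Analysis"
begin

definition l1norm :: "real ^ 'k \<Rightarrow> real" where
  "l1norm y = (\<Sum>j\<in>UNIV. \<bar>y $ j\<bar>)"

definition subdiff :: "(real ^ 'k \<Rightarrow> real) \<Rightarrow> real ^ 'k \<Rightarrow> (real ^ 'k) set" where
  "subdiff f y = {g. \<forall>z. f z \<ge> f y + inner g (z - y)}"

definition TV :: "('n \<Rightarrow> real ^ 'n ^ 'k) \<Rightarrow> real ^ 'n \<Rightarrow> real" where
  "TV D x = (\<Sum>i\<in>UNIV. l1norm (D i *v x))"

definition trainloss :: "real ^ 'n ^ 'm \<Rightarrow> real ^ 'm \<Rightarrow> real ^ 'n \<Rightarrow> real" where
  "trainloss Phi b x = (1/2) * (norm (Phi *v x - b))\<^sup>2"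

definition nonneg2 :: "real \<times> real \<Rightarrow> bool" where
  "nonneg2 p \<longleftrightarrow> fst p \<ge> 0 \<and> snd p \<ge> 0"

definition Sp :: "real ^ 'n ^ 'd \<Rightarrow> ('n \<Rightarrow> real ^ 'n ^ 'k) \<Rightarrow> real ^ 'n ^ 'm \<Rightarrow> real ^ 'm
    \<Rightarrow> real \<times> real \<Rightarrow> (real ^ 'n) set" where
  "Sp Psi D Phi b lam = {x. \<forall>z.
      trainloss Phi b x + fst lam * l1norm (Psi *v x) + snd lam * TV D x
      \<le> trainloss Phi b z + fst lam * l1norm (Psi *v z) + snd lam * TV D z}"

definition Sc :: "real ^ 'n ^ 'd \<Rightarrow> ('n \<Rightarrow> real ^ 'n ^ 'k) \<Rightarrow> real ^ 'n ^ 'm \<Rightarrow> real ^ 'm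
    \<Rightarrow> real \<times> real \<Rightarrow> (real ^ 'n) set" where
  "Sc Psi D Phi b r = {x. l1norm (Psi *v x) \<le> fst r \<and> TV D x \<le> snd r \<and>
      (\<forall>z. l1norm (Psi *v z) \<le> fst r \<and> TV D z \<le> snd r \<longrightarrow> trainloss Phi b x \<le> trainloss Phi b z)}"

definition local_opt :: "('a::metric_space \<Rightarrow> real) \<Rightarrow> ('a \<Rightarrow> 'b::metric_space \<Rightarrow> bool)
    \<Rightarrow> 'a \<Rightarrow> 'b \<Rightarrow> bool" where
  "local_opt F feas xb yb \<longleftrightarrow> feas xb yb \<and>
     (\<exists>\<epsilon>>0. \<forall>x y. feas x y \<and> dist (x, y) (xb, yb) < \<epsilon> \<longrightarrow> F xb \<le> F x)"

definition feasP1 where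
  "feasP1 Psi D Phi b x lam \<longleftrightarrow> nonneg2 lam \<and> x \<in> Sp Psi D Phi b lam"

definition feasP2 where
  "feasP2 Psi D Phi b x r \<longleftrightarrow> nonneg2 r \<and> x \<in> Sc Psi D Phi b r"

definition Qmap :: "real ^ 'n ^ 'd \<Rightarrow> ('n \<Rightarrow> real ^ 'n ^ 'k) \<Rightarrow> real ^ 'n \<Rightarrow> real \<times> real" where
  "Qmap Psi D x = (l1norm (Psi *v x), TV D x)"

definition Mset :: "real ^ 'n ^ 'd \<Rightarrow> ('n \<Rightarrow> real ^ 'n ^ 'k) \<Rightarrow> real ^ 'n ^ 'm \<Rightarrow> real ^ 'm
    \<Rightarrow> real \<times> real \<Rightarrow> ((real ^ 'n) \<times> (real \<times> real)) set" where
  "Mset Psi D Phi b r = {(x, xi). nonneg2 xi \<and>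
     (\<exists>s1 \<in> subdiff l1norm (Psi *v x). \<exists>s2. (\<forall>i. s2 i \<in> subdiff l1norm (D i *v x)) \<and>
        0 = transpose Phi *v (Phi *v x - b) + fst xi *\<^sub>R (transpose Psi *v s1)
            + snd xi *\<^sub>R (\<Sum>i\<in>UNIV. transpose (D i) *v s2 i)) \<and>
     fst xi * (l1norm (Psi *v x) - fst r) = 0 \<and>
     snd xi * (TV D x - snd r) = 0}"

end

theory Submission
  imports Defs
begin

text \<open>
  The multipliers in \<open>\<M>(r)\<close> certify that \<open>0\<close> is a subgradient of the convex penalized
  objective with weights \<open>\<xi>\<close>, so \<open>x\<close> solves the penalized problem for \<open>\<lambda> = \<xi>\<close>. Conversely, every solution \<open>x\<close> of a
  penalized problem solves the constrained problem with budget \<open>r = Q(x)\<close>. Since \<open>Q\<close> is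
  continuous, feasible points of (P1) near \<open>(x, \<xi>)\<close> thus yield feasible points
  \<open>(x', Q(x'))\<close> of (P2) near \<open>(x, Q(x))\<close>, where \<open>F\<close> cannot drop below \<open>F(x)\<close>.
\<close>

lemma subdiff_zero_imp_min:
  assumes "0 \<in> subdiff f x"
  shows "f x \<le> f z"
  using assms unfolding subdiff_def by auto

lemma subdiff_add:
  assumes "g \<in> subdiff f x" and "h \<in> subdiff k x"
  shows "g + h \<in> subdiff (\<lambda>y. f y + k y) x"
  using assms unfolding subdiff_def by (auto simp: inner_add_left intro: add_mono[THEN order_trans[rotated]])

lemma subdiff_scale:
  assumes "0 \<le> c" and "g \<in> subdiff f x"
  shows "c *\<^sub>R g \<in> subdiff (\<lambda>y. c * f y) x"
proof -
  have "c * f x + inner (c *\<^sub>R g) (z - x) \<le> c * f z" for z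
    using mult_left_mono[OF assms(2)[unfolded subdiff_def, THEN CollectD, rule_format, of z] assms(1)]
    by (simp add: distrib_left)
  then show ?thesis unfolding subdiff_def by simp
qed

lemma subdiff_sum:
  assumes "\<And>i. i \<in> I \<Longrightarrow> g i \<in> subdiff (f i) x"
  shows "(\<Sum>i\<in>I. g i) \<in> subdiff (\<lambda>y. \<Sum>i\<in>I. f i y) x"
proof -
  have "(\<Sum>i\<in>I. f i x) + inner (\<Sum>i\<in>I. g i) (z - x) = (\<Sum>i\<in>I. f i x + inner (g i) (z - x))" for z
    by (simp add: sum.distrib inner_sum_left)
  moreover have "(\<Sum>i\<in>I. f i x + inner (g i) (z - x)) \<le> (\<Sum>i\<in>I. f i z)" for z
    using assms unfolding subdiff_def by (intro sum_mono) blast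
  ultimately show ?thesis unfolding subdiff_def by simp
qed

lemma subdiff_comp_matrix:
  assumes "s \<in> subdiff f (A *v x)"
  shows "transpose A *v s \<in> subdiff (\<lambda>y. f (A *v y)) x"
  using assms unfolding subdiff_def
  by (simp add: dot_lmul_matrix matrix_vector_mult_diff_distrib)

lemma trainloss_gradient_in_subdiff:
  "transpose Phi *v (Phi *v x - b) \<in> subdiff (trainloss Phi b) x"
proof -
  have "trainloss Phi b z \<ge> trainloss Phi b x + inner (transpose Phi *v (Phi *v x - b)) (z - x)" for z
  proof -
    have split: "Phi *v z - b = (Phi *v x - b) + Phi *v (z - x)"
      by (simp add: matrix_vector_mult_diff_distrib)
    have "(norm (Phi *v z - b))\<^sup>2 = (norm (Phi *v x - b))\<^sup>2
        + 2 * inner (Phi *v x - b) (Phi *v (z - x)) + (norm (Phi *v (z - x)))\<^sup>2"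
      unfolding split by (simp add: power2_norm_eq_inner inner_add_left inner_add_right inner_commute)
    then show ?thesis
      unfolding trainloss_def by (simp add: dot_lmul_matrix)
  qed
  then show ?thesis unfolding subdiff_def by simp
qed

lemma TV_subgradient_in_subdiff:
  assumes "\<And>i. s i \<in> subdiff l1norm (D i *v x)"
  shows "(\<Sum>i\<in>UNIV. transpose (D i) *v s i) \<in> subdiff (TV D) x"
  unfolding TV_def[abs_def] using assms by (intro subdiff_sum subdiff_comp_matrix)

lemma Mset_imp_Sp:
  assumes "(x, xi) \<in> Mset Psi D Phi b r"
  shows "x \<in> Sp Psi D Phi b xi"
proof -
  from assms obtain s1 s2 where xi: "nonneg2 xi"
    and s1: "s1 \<in> subdiff l1norm (Psi *v x)"
    and s2: "\<And>i. s2 i \<in> subdiff l1norm (D i *v x)"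
    and stationary: "0 = transpose Phi *v (Phi *v x - b) + fst xi *\<^sub>R (transpose Psi *v s1)
        + snd xi *\<^sub>R (\<Sum>i\<in>UNIV. transpose (D i) *v s2 i)"
    unfolding Mset_def by blast
  have "0 \<in> subdiff (\<lambda>y. trainloss Phi b y + fst xi * l1norm (Psi *v y) + snd xi * TV D y) x"
    unfolding stationary using xi unfolding nonneg2_def
    by (intro subdiff_add subdiff_scale trainloss_gradient_in_subdiff subdiff_comp_matrix
        TV_subgradient_in_subdiff s1 s2) auto
  then show ?thesis
    unfolding Sp_def by (auto intro: subdiff_zero_imp_min)
qed

lemma Sp_subset_Sc_Qmap:
  assumes "nonneg2 lam" and "x \<in> Sp Psi D Phi b lam"
  shows "x \<in> Sc Psi D Phi b (Qmap Psi D x)"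
  unfolding Sc_def Qmap_def
proof (intro CollectI conjI allI impI; simp?)
  fix z assume z: "l1norm (Psi *v z) \<le> l1norm (Psi *v x) \<and> TV D z \<le> TV D x"
  have "trainloss Phi b x + fst lam * l1norm (Psi *v x) + snd lam * TV D x
      \<le> trainloss Phi b z + fst lam * l1norm (Psi *v z) + snd lam * TV D z"
    using assms(2) unfolding Sp_def by blast
  moreover have "fst lam * l1norm (Psi *v z) \<le> fst lam * l1norm (Psi *v x)"
    and "snd lam * TV D z \<le> snd lam * TV D x"
    using z assms(1) unfolding nonneg2_def by (simp_all add: mult_left_mono)
  ultimately show "trainloss Phi b x \<le> trainloss Phi b z" by linarith
qed

lemma feasP1_imp_feasP2_Qmap:
  assumes "feasP1 Psi D Phi b x lam"
  shows "feasP2 Psi D Phi b x (Qmap Psi D x)"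
proof -
  have "nonneg2 (Qmap Psi D x)"
    by (simp add: nonneg2_def Qmap_def l1norm_def TV_def sum_nonneg)
  with assms show ?thesis
    by (auto simp: feasP1_def feasP2_def intro: Sp_subset_Sc_Qmap)
qed

lemma isCont_Qmap: "isCont (Qmap Psi D) x"
  unfolding Qmap_def TV_def l1norm_def by (intro continuous_intros)

lemma local_opt_transfer:
  fixes Q :: "'a::metric_space \<Rightarrow> 'c::metric_space" and yb :: "'b::metric_space"
  assumes opt: "local_opt F feas xb (Q xb)"
    and cont: "isCont Q xb"
    and lift: "\<And>x y. feas' x y \<Longrightarrow> feas x (Q x)"
    and feas': "feas' xb yb"
  shows "local_opt F feas' xb yb"
proof -
  from opt obtain e where "e > 0"
    and min: "\<And>x y. feas x y \<Longrightarrow> dist (x, y) (xb, Q xb) < e \<Longrightarrow> F xb \<le> F x"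
    unfolding local_opt_def by blast
  have "isCont (\<lambda>x. (x, Q x)) xb"
    using cont by (intro continuous_intros)
  then obtain d where "d > 0"
    and close: "\<And>x. dist x xb < d \<Longrightarrow> dist (x, Q x) (xb, Q xb) < e"
    using \<open>e > 0\<close> unfolding continuous_at_eps_delta by blast
  have "F xb \<le> F x" if "feas' x y" and "dist (x, y) (xb, yb) < d" for x y
  proof -
    have "dist x xb < d"
      using that(2) dist_fst_le[of "(x, y)" "(xb, yb)"] by simp
    then show ?thesis
      using min[OF lift[OF that(1)] close] by simp
  qed
  with \<open>d > 0\<close> feas' show ?thesis
    unfolding local_opt_def by blast
qed

theorem mainTheorem4:
  fixes Psi :: "real ^ 'n ^ 'd" and D :: "'n \<Rightarrow> real ^ 'n ^ 'k"
    and Phi_tr :: "real ^ 'n ^ 'm1" and b_tr :: "real ^ 'm1"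
    and Phi_val :: "real ^ 'n ^ 'm2" and b_val :: "real ^ 'm2"
    and xb :: "real ^ 'n" and rb xib :: "real \<times> real"
  defines "F \<equiv> (\<lambda>x. (1/2) * (norm (Phi_val *v x - b_val))\<^sup>2)"
  assumes "rb = Qmap Psi D xb"
    and "local_opt F (feasP2 Psi D Phi_tr b_tr) xb rb"
    and "(xb, xib) \<in> Mset Psi D Phi_tr b_tr rb"
  shows "local_opt F (feasP1 Psi D Phi_tr b_tr) xb xib"
proof (rule local_opt_transfer[where Q = "Qmap Psi D"])
  show "local_opt F (feasP2 Psi D Phi_tr b_tr) xb (Qmap Psi D xb)"
    using assms(2,3) by simp
  show "isCont (Qmap Psi D) xb"
    by (rule isCont_Qmap)
  show "feasP2 Psi D Phi_tr b_tr x (Qmap Psi D x)" if "feasP1 Psi D Phi_tr b_tr x lam" for x lam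
    using that by (rule feasP1_imp_feasP2_Qmap)
  have "nonneg2 xib"
    using assms(4) unfolding Mset_def by blast
  with Mset_imp_Sp[OF assms(4)] show "feasP1 Psi D Phi_tr b_tr xb xib"
    by (simp add: feasP1_def)
qed

end
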